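(* Let $\mathbf{Q}=\langle Q;\oplus,-,{}^+,{}^-,0,1\rangle$ be a strong quasi-MV* algebra. For $x,y\in Q$ define $x\to y:=-x\oplus y$ and $\neg x:=-x$. Then $f(\mathbf{Q})=\langle Q;\to,\neg,{}^+,{}^-,1\rangle$ is a strong quasi-Wajsberg* algebra (with $x\vee y:=((x^{+}\to y^{+})^{+}\to(\neg x)^{-})\to((y^{-}\to x^{-})^{-}\to x^{-})$).
   Context: A quasi-MV* algebra is an algebra $\langle A;\oplus,-,{}^{+},{}^{-},0,1\rangle$ of type $\langle 2,1,1,1,0,0\rangle$ (${}^+,{}^-$ bind more tightly than $-$, which binds more tightly than $\oplus$; $-1$ denotes $-(1)$) such that for all $x,y,z$: (1) $x\oplus y=y\oplus x$; (2) $(1\oplus x)\oplus(y\oplus(1\oplus z))=((1\oplus x)\oplus y)\oplus(1\oplus z)$; (3) $(x\oplus 1)\oplus 1=1$; (4) $(x\oplus y)\oplus 0=x\oplus y$; (5) $x^{+}\oplus 0=(x\oplus 0)^{+}=1\oplus(-1\oplus x)$ and $x^{-}\oplus 0=(x\oplus 0)^{-}=-1\oplus(1\oplus x)$; (6) $x\oplus y=(x^{+}\oplus y^{+})\oplus(x^{-}\oplus y^{-})$; (7) $0=-0$; (8) $x\oplus(-x)=0$; (9) $-(x\oplus y)=(-x)\oplus(-y)$; (10) $-(-x)=x$; (11) $(-x\oplus(x\oplus y))^{+}=-x^{+}\oplus(x^{+}\oplus y^{+})$; (12) $x\vee y=y\vee x$; (13) $x\vee(y\vee z)=(x\vee y)\vee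 z$; (14) $x\oplus(y\vee z)=(x\oplus y)\vee(x\oplus z)$; where $x\vee y:=(x^{+}\oplus(-x^{+}\oplus y^{+})^{+})\oplus(x^{-}\oplus(-x^{-}\oplus y^{-})^{+})$. A strong quasi-MV* algebra is a quasi-MV* algebra satisfying $x^+=x^+\oplus 0$ and $x^-=x^-\oplus 0$. A quasi-Wajsberg* algebra is an algebra $\langle W;\to,\neg,{}^+,{}^-,1\rangle$ of type $\langle 2,1,1,1,0\rangle$ (${}^+,{}^-$ bind more tightly than $\neg$, which binds more tightly than $\to$) such that for all $x,y,z$: (1) $x\to y=\neg y\to\neg x$; (2) $(x\to 1)\to((y\to 1)\to z)=(y\to 1)\to((x\to 1)\to z)$; (3) $(1\to x)\to 1=1$; (4) $(z\to z)\to(x\to y)=x\to y$; (5) $(1\to 1)\to x^{+}=((1\to 1)\to x)^{+}=(x\to 1)\to 1$ and $(1\to 1)\to x^{-}=((1\to 1)\to x)^{-}=(x\to\neg 1)\to\neg 1$; (6) $x\to y=(y^{+}\to x^{-})\to(x^{+}\to y^{-})$; (7) $\neg(x\to y)=y\to x$; (8) $\neg\neg x=x$; (9) $(x\to(\neg x\to y))^{+}=x^{+}\to(\neg x^{+}\to y^{+})$; (10) $x\vee y=y\vee x$; (11) $x\vee(y\vee z)=(x\vee y)\vee z$; (12) $x\to(y\vee z)=(x\to y)\vee(x\to z)$; where $x\vee y:=((x^{+}\to y^{+})^{+}\to(\neg x)^{-})\to((y^{-}\to x^{-})^{-}\to x^{-})$. A strong quasi-Wajsberg* algebra is a quasi-Wajsberg*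 algebra satisfying $x^+=(1\to 1)\to x^+$ and $x^-=(1\to 1)\to x^-$ for all $x$. *)

theory Defs
  imports Main
begin

text \<open>Quasi-MV* algebras, with carrier the whole type 'a.
  Operations: oplus (binary), neg (the unary minus), pl (^+), mi (^-), zero, one.\<close>

definition qmv_join :: "('a \<Rightarrow> 'a \<Rightarrow> 'a) \<Rightarrow> ('a \<Rightarrow> 'a) \<Rightarrow> ('a \<Rightarrow> 'a) \<Rightarrow> ('a \<Rightarrow> 'a) \<Rightarrow> 'a \<Rightarrow> 'a \<Rightarrow> 'a" where
  "qmv_join oplus neg pl mi x y =
     oplus (oplus (pl x) (pl (oplus (neg (pl x)) (pl y))))
           (oplus (mi x) (pl (oplus (neg (mi x)) (mi y))))"

definition quasi_MV_star ::
  "('a \<Rightarrow> 'a \<Rightarrow> 'a) \<Rightarrow> ('a \<Rightarrow> 'a) \<Rightarrow> ('a \<Rightarrow> 'a) \<Rightarrow> ('a \<Rightarrow> 'a) \<Rightarrow> 'a \<Rightarrow> 'a \<Rightarrow> bool" where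
  "quasi_MV_star oplus neg pl mi zero one \<longleftrightarrow>
    (\<forall>x y z.
      oplus x y = oplus y x \<and>
      oplus (oplus one x) (oplus y (oplus one z)) = oplus (oplus (oplus one x) y) (oplus one z) \<and>
      oplus (oplus x one) one = one \<and>
      oplus (oplus x y) zero = oplus x y \<and>
      oplus (pl x) zero = pl (oplus x zero) \<and>
      pl (oplus x zero) = oplus one (oplus (neg one) x) \<and>
      oplus (mi x) zero = mi (oplus x zero) \<and>
      mi (oplus x zero) = oplus (neg one) (oplus one x) \<and>
      oplus x y = oplus (oplus (pl x) (pl y)) (oplus (mi x) (mi y)) \<and>
      zero = neg zero \<and>
      oplus x (neg x) = zero \<and>
      neg (oplus x y) = oplus (neg x) (neg y) \<and>
      neg (neg x) = x \<and>
      pl (oplus (neg x) (oplus x y)) = oplus (neg (pl x)) (oplus (pl x) (pl y)) \<and>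
      qmv_join oplus neg pl mi x y = qmv_join oplus neg pl mi y x \<and>
      qmv_join oplus neg pl mi x (qmv_join oplus neg pl mi y z)
        = qmv_join oplus neg pl mi (qmv_join oplus neg pl mi x y) z \<and>
      oplus x (qmv_join oplus neg pl mi y z)
        = qmv_join oplus neg pl mi (oplus x y) (oplus x z))"

definition strong_quasi_MV_star ::
  "('a \<Rightarrow> 'a \<Rightarrow> 'a) \<Rightarrow> ('a \<Rightarrow> 'a) \<Rightarrow> ('a \<Rightarrow> 'a) \<Rightarrow> ('a \<Rightarrow> 'a) \<Rightarrow> 'a \<Rightarrow> 'a \<Rightarrow> bool" where
  "strong_quasi_MV_star oplus neg pl mi zero one \<longleftrightarrow>
    quasi_MV_star oplus neg pl mi zero one \<and>
    (\<forall>x. pl x = oplus (pl x) zero \<and> mi x = oplus (mi x) zero)"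

definition qw_join :: "('a \<Rightarrow> 'a \<Rightarrow> 'a) \<Rightarrow> ('a \<Rightarrow> 'a) \<Rightarrow> ('a \<Rightarrow> 'a) \<Rightarrow> ('a \<Rightarrow> 'a) \<Rightarrow> 'a \<Rightarrow> 'a \<Rightarrow> 'a" where
  "qw_join imp nt pl mi x y =
     imp (imp (pl (imp (pl x) (pl y))) (mi (nt x)))
         (imp (mi (imp (mi y) (mi x))) (mi x))"

definition quasi_Wajsberg_star ::
  "('a \<Rightarrow> 'a \<Rightarrow> 'a) \<Rightarrow> ('a \<Rightarrow> 'a) \<Rightarrow> ('a \<Rightarrow> 'a) \<Rightarrow> ('a \<Rightarrow> 'a) \<Rightarrow> 'a \<Rightarrow> bool" where
  "quasi_Wajsberg_star imp nt pl mi one \<longleftrightarrow>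
    (\<forall>x y z.
      imp x y = imp (nt y) (nt x) \<and>
      imp (imp x one) (imp (imp y one) z) = imp (imp y one) (imp (imp x one) z) \<and>
      imp (imp one x) one = one \<and>
      imp (imp z z) (imp x y) = imp x y \<and>
      imp (imp one one) (pl x) = pl (imp (imp one one) x) \<and>
      pl (imp (imp one one) x) = imp (imp x one) one \<and>
      imp (imp one one) (mi x) = mi (imp (imp one one) x) \<and>
      mi (imp (imp one one) x) = imp (imp x (nt one)) (nt one) \<and>
      imp x y = imp (imp (pl y) (mi x)) (imp (pl x) (mi y)) \<and>
      nt (imp x y) = imp y x \<and>
      nt (nt x) = x \<and>
      pl (imp x (imp (nt x) y)) = imp (pl x) (imp (nt (pl x)) (pl y)) \<and>
      qw_join imp nt pl mi x y = qw_join imp nt pl mi y x \<and>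
      qw_join imp nt pl mi x (qw_join imp nt pl mi y z)
        = qw_join imp nt pl mi (qw_join imp nt pl mi x y) z \<and>
      imp x (qw_join imp nt pl mi y z)
        = qw_join imp nt pl mi (imp x y) (imp x z))"

definition strong_quasi_Wajsberg_star ::
  "('a \<Rightarrow> 'a \<Rightarrow> 'a) \<Rightarrow> ('a \<Rightarrow> 'a) \<Rightarrow> ('a \<Rightarrow> 'a) \<Rightarrow> ('a \<Rightarrow> 'a) \<Rightarrow> 'a \<Rightarrow> bool" where
  "strong_quasi_Wajsberg_star imp nt pl mi one \<longleftrightarrow>
    quasi_Wajsberg_star imp nt pl mi one \<and>
    (\<forall>x. pl x = imp (imp one one) (pl x) \<and> mi x = imp (imp one one) (mi x))"

end

theory Submission
  imports Defs
begin

text \<open>Reading \<open>x \<rightarrow> y\<close> as \<open>-x \<oplus> y\<close>, every quasi-Wajsberg* axiom becomes a quasi-MV* axiom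
  after pushing \<open>-\<close> through sums with \<open>-(x \<oplus> y) = -x \<oplus> -y\<close> and \<open>--x = x\<close>; in particular
  associativity at \<open>1\<close> is transported to associativity at \<open>-1\<close>. The one genuinely new fact is
  \<open>(-x)\<^sup>+ = -(x\<^sup>-)\<close>: axiom (5) gives it for elements of the form \<open>x \<oplus> 0\<close>, and strongness
  removes the \<open>\<oplus> 0\<close>. With it the Wajsberg join coincides with the MV join and axiom (6)
  translates directly.\<close>

locale quasi_MV_star_algebra =
  fixes oplus :: "'a \<Rightarrow> 'a \<Rightarrow> 'a" (infixl "\<oplus>" 65)
    and neg pl mi :: "'a \<Rightarrow> 'a" and zero one :: 'a
  assumes quasi_MV_star: "quasi_MV_star (\<oplus>) neg pl mi zero one"
begin

lemma
  shows add_commute: "x \<oplus> y = y \<oplus> x"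
    and add_assoc_one: "(one \<oplus> x) \<oplus> (y \<oplus> (one \<oplus> z)) = ((one \<oplus> x) \<oplus> y) \<oplus> (one \<oplus> z)"
    and add_one_one: "(x \<oplus> one) \<oplus> one = one"
    and add_add_zero: "(x \<oplus> y) \<oplus> zero = x \<oplus> y"
    and pl_add_zero: "pl x \<oplus> zero = pl (x \<oplus> zero)"
    and pl_add_zero_eq: "pl (x \<oplus> zero) = one \<oplus> (neg one \<oplus> x)"
    and mi_add_zero: "mi x \<oplus> zero = mi (x \<oplus> zero)"
    and mi_add_zero_eq: "mi (x \<oplus> zero) = neg one \<oplus> (one \<oplus> x)"
    and add_pl_mi: "x \<oplus> y = (pl x \<oplus> pl y) \<oplus> (mi x \<oplus> mi y)"
    and neg_zero: "neg zero = zero"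
    and add_neg_self: "x \<oplus> neg x = zero"
    and neg_add: "neg (x \<oplus> y) = neg x \<oplus> neg y"
    and neg_neg: "neg (neg x) = x"
    and pl_neg_add_add: "pl (neg x \<oplus> (x \<oplus> y)) = neg (pl x) \<oplus> (pl x \<oplus> pl y)"
    and qmv_join_commute: "qmv_join (\<oplus>) neg pl mi x y = qmv_join (\<oplus>) neg pl mi y x"
    and qmv_join_assoc: "qmv_join (\<oplus>) neg pl mi x (qmv_join (\<oplus>) neg pl mi y z)
                           = qmv_join (\<oplus>) neg pl mi (qmv_join (\<oplus>) neg pl mi x y) z"
    and add_qmv_join_distrib: "x \<oplus> qmv_join (\<oplus>) neg pl mi y z
                                 = qmv_join (\<oplus>) neg pl mi (x \<oplus> y) (x \<oplus> z)"
  using quasi_MV_star unfolding quasi_MV_star_def by metis+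

lemma zero_add: "zero \<oplus> x = x \<oplus> zero"
  by (rule add_commute)

lemma neg_add_self_neg: "neg (neg x \<oplus> x) = zero"
  by (simp add: neg_add neg_neg add_neg_self)

lemma add_assoc_neg_one:
  "(neg one \<oplus> x) \<oplus> (y \<oplus> (neg one \<oplus> z)) = ((neg one \<oplus> x) \<oplus> y) \<oplus> (neg one \<oplus> z)"
  using arg_cong[OF add_assoc_one[of "neg x" "neg y" "neg z"], of neg]
  by (simp add: neg_add neg_neg)

lemma add_left_commute_neg_one:
  "(neg one \<oplus> x) \<oplus> ((neg one \<oplus> y) \<oplus> z) = (neg one \<oplus> y) \<oplus> ((neg one \<oplus> x) \<oplus> z)"
  using add_assoc_neg_one[of x z y] by (simp add: add_commute)

lemma pl_neg_add_zero: "pl (neg (x \<oplus> zero)) = neg (mi (x \<oplus> zero))"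
proof -
  have "pl (neg (x \<oplus> zero)) = pl (neg x \<oplus> zero)"
    by (simp add: neg_add neg_zero)
  also have "\<dots> = one \<oplus> (neg one \<oplus> neg x)"
    by (rule pl_add_zero_eq)
  also have "\<dots> = neg (mi (x \<oplus> zero))"
    by (simp add: mi_add_zero_eq neg_add neg_neg)
  finally show ?thesis .
qed

lemma neg_mi_add: "neg (mi (x \<oplus> y)) = pl (neg x \<oplus> neg y)"
  using pl_neg_add_zero[of "x \<oplus> y"] by (simp add: add_add_zero neg_add)

end

locale strong_quasi_MV_star_algebra =
  fixes oplus :: "'a \<Rightarrow> 'a \<Rightarrow> 'a" (infixl "\<oplus>" 65)
    and neg pl mi :: "'a \<Rightarrow> 'a" and zero one :: 'a
  assumes strong_quasi_MV_star: "strong_quasi_MV_star (\<oplus>) neg pl mi zero one"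

sublocale strong_quasi_MV_star_algebra \<subseteq> quasi_MV_star_algebra
  using strong_quasi_MV_star unfolding strong_quasi_MV_star_def
  by unfold_locales blast

context strong_quasi_MV_star_algebra
begin

lemma
  shows pl_eq_pl_add_zero: "pl x = pl x \<oplus> zero"
    and mi_eq_mi_add_zero: "mi x = mi x \<oplus> zero"
  using strong_quasi_MV_star unfolding strong_quasi_MV_star_def by blast+

lemma pl_of_add_zero: "pl (x \<oplus> zero) = pl x"
  using pl_add_zero pl_eq_pl_add_zero by metis

lemma mi_of_add_zero: "mi (x \<oplus> zero) = mi x"
  using mi_add_zero mi_eq_mi_add_zero by metis

lemma pl_neg: "pl (neg x) = neg (mi x)"
  using pl_neg_add_zero[of x] neg_add[of x zero]
  by (simp add: neg_zero pl_of_add_zero mi_of_add_zero)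

lemma mi_neg: "mi (neg x) = neg (pl x)"
  using pl_neg[of "neg x"] by (metis neg_neg)

lemma neg_mi_neg: "neg (mi (neg x)) = pl x"
  by (simp add: mi_neg neg_neg)

lemma qw_join_eq_qmv_join:
  "qw_join (\<lambda>x y. neg x \<oplus> y) neg pl mi x y = qmv_join (\<oplus>) neg pl mi x y"
  unfolding qw_join_def qmv_join_def
  by (simp add: neg_mi_add neg_mi_neg neg_add neg_neg add_commute)

lemma quasi_Wajsberg_star_neg_add: "quasi_Wajsberg_star (\<lambda>x y. neg x \<oplus> y) neg pl mi one"
  unfolding quasi_Wajsberg_star_def qw_join_eq_qmv_join neg_add_self_neg
proof (intro allI conjI)
  fix x y z
  show "neg x \<oplus> y = neg (neg y) \<oplus> neg x"
    by (simp add: neg_neg add_commute)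
  show "neg (neg x \<oplus> one) \<oplus> (neg (neg y \<oplus> one) \<oplus> z)
          = neg (neg y \<oplus> one) \<oplus> (neg (neg x \<oplus> one) \<oplus> z)"
    using add_left_commute_neg_one[of x y z] by (simp add: neg_add neg_neg add_commute)
  show "neg (neg one \<oplus> x) \<oplus> one = one"
    using add_one_one[of "neg x"] by (simp add: neg_add neg_neg add_commute)
  show "zero \<oplus> (neg x \<oplus> y) = neg x \<oplus> y"
    by (simp add: zero_add add_add_zero)
  show "zero \<oplus> pl x = pl (zero \<oplus> x)"
    by (simp add: zero_add pl_add_zero)
  show "pl (zero \<oplus> x) = neg (neg x \<oplus> one) \<oplus> one"
    by (simp add: zero_add pl_add_zero_eq neg_add neg_neg add_commute)
  show "zero \<oplus> mi x = mi (zero \<oplus> x)"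
    by (simp add: zero_add mi_add_zero)
  show "mi (zero \<oplus> x) = neg (neg x \<oplus> neg one) \<oplus> neg one"
    by (simp add: zero_add mi_add_zero_eq neg_add neg_neg add_commute)
  show "neg x \<oplus> y = neg (neg (pl y) \<oplus> mi x) \<oplus> (neg (pl x) \<oplus> mi y)"
    using add_pl_mi[of "neg x" y] by (simp add: pl_neg mi_neg neg_add neg_neg add_commute)
  show "neg (neg x \<oplus> y) = neg y \<oplus> x"
    by (simp add: neg_add neg_neg add_commute)
  show "neg (neg x) = x"
    by (rule neg_neg)
  show "pl (neg x \<oplus> (neg (neg x) \<oplus> y)) = neg (pl x) \<oplus> (neg (neg (pl x)) \<oplus> pl y)"
    unfolding neg_neg by (rule pl_neg_add_add)
  show "qmv_join (\<oplus>) neg pl mi x y = qmv_join (\<oplus>) neg pl mi y x"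
    by (rule qmv_join_commute)
  show "qmv_join (\<oplus>) neg pl mi x (qmv_join (\<oplus>) neg pl mi y z)
          = qmv_join (\<oplus>) neg pl mi (qmv_join (\<oplus>) neg pl mi x y) z"
    by (rule qmv_join_assoc)
  show "neg x \<oplus> qmv_join (\<oplus>) neg pl mi y z
          = qmv_join (\<oplus>) neg pl mi (neg x \<oplus> y) (neg x \<oplus> z)"
    by (rule add_qmv_join_distrib)
qed

lemma strong_quasi_Wajsberg_star_neg_add:
  "strong_quasi_Wajsberg_star (\<lambda>x y. neg x \<oplus> y) neg pl mi one"
  unfolding strong_quasi_Wajsberg_star_def neg_add_self_neg zero_add
  using quasi_Wajsberg_star_neg_add pl_eq_pl_add_zero mi_eq_mi_add_zero by blast

end

theorem proposition3p4:
  fixes oplus :: "'a \<Rightarrow> 'a \<Rightarrow> 'a" and neg pl mi :: "'a \<Rightarrow> 'a" and zero one :: 'a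
  assumes "strong_quasi_MV_star oplus neg pl mi zero one"
  shows "strong_quasi_Wajsberg_star (\<lambda>x y. oplus (neg x) y) neg pl mi one"
proof -
  interpret strong_quasi_MV_star_algebra oplus neg pl mi zero one
    using assms by (rule strong_quasi_MV_star_algebra.intro)
  show ?thesis
    by (rule strong_quasi_Wajsberg_star_neg_add)
qed

end
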